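(* Let $(\xi_i,\mathcal{F}_i)_{i\ge 0}$ be a sequence of real-valued martingale differences on $(\Omega,\mathcal{F},\mathbf{P})$ with $\xi_0=0$, $\mathcal{F}_0=\{\emptyset,\Omega\}$, increasing $\sigma$-fields $\mathcal{F}_i\subseteq\mathcal{F}$ and $\mathbf{E}[\xi_i\mid\mathcal{F}_{i-1}]=0$ for $i\ge1$. Let $S_k=\sum_{i=1}^k\xi_i$. Let $\alpha\in(0,1)$ and assume $C_n:=\sum_{i=1}^n\mathbf{E}[\xi_i^2\exp\{(\xi_i^+)^\alpha\}]<\infty$ for every $n$. Define $\Upsilon(S)_n=\sum_{i=1}^n\mathbf{E}[\xi_i^2\exp\{(\xi_i^+)^\alpha\}\mid\mathcal{F}_{i-1}]$. If $\|\Upsilon(S)_n\|_\infty=o(n^{2-\alpha})$ as $n\to\infty$, then for any $x\ge0$, $$\limsup_{n\to\infty}\frac{1}{n^\alpha}\log\mathbf{P}\Big(\max_{1\le k\le n}\frac1n S_k\ge x\Big)\le -x^\alpha .$$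
   Context: $x^+=\max\{x,0\}$; $\|\cdot\|_\infty$ is the essential supremum norm. *)

theory Defs
  imports "HOL-Probability.Probability"
begin

definition ereal_ln :: "real \<Rightarrow> ereal" where
  "ereal_ln p = (if p \<le> 0 then -\<infinity> else ereal (ln p))"

end

theory Submission
  imports Defs "HOL-Real_Asymp.Real_Asymp"
begin

text \<open>
  Put b = n x and \<lambda> = b powr (\<alpha> - 1). Since \<lambda> t \<le> t powr \<alpha> for 0 < t \<le> b, Taylor's formula
  gives exp (\<lambda> t) \<le> 1 + \<lambda> t + \<lambda>^2 t^2 exp (max t 0 powr \<alpha>) / 2 for all t \<le> b. Hence, with
  the increments truncated at b, the process
  Z_k = exp (\<Sum>i\<le>k. \<lambda> min \<xi>_i b - \<lambda>^2 / 2 E[\<xi>_i^2 exp (max \<xi>_i 0 powr \<alpha>) | F_(i-1)])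
  is a nonnegative supermartingale and E Z_k \<le> 1. If S_k \<ge> b, then either some \<xi>_i exceeds b,
  which by Markov's inequality has total probability at most V / (b^2 exp (b powr \<alpha>)), where V
  bounds \<Upsilon>(S)_n; or the truncated sum reaches b, which forces Z_k \<ge> exp (b powr \<alpha> - \<lambda>^2 V / 2).
  For V = \<epsilon> n powr (2 - \<alpha>) the correction \<lambda>^2 V / 2 = \<epsilon> x powr (2\<alpha> - 2) n powr \<alpha> / 2 is
  negligible as \<epsilon> \<rightarrow> 0.
\<close>

lemma exp_le_quadratic_bound: "exp (s::real) \<le> 1 + s + s\<^sup>2 / 2 * exp (max s 0)"
proof (cases "s \<ge> 0")
  case True
  obtain t where t: "\<bar>t\<bar> \<le> \<bar>s\<bar>" "exp s = (\<Sum>m<2. s ^ m / fact m) + exp t / fact 2 * s\<^sup>2"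
    using Maclaurin_exp_le[of s 2] by blast
  have "exp t * s\<^sup>2 \<le> exp s * s\<^sup>2" using t(1) True by (intro mult_right_mono) auto
  then have "exp t / fact 2 * s\<^sup>2 \<le> s\<^sup>2 / 2 * exp (max s 0)" using True by (simp add: max_def mult.commute)
  moreover have "(\<Sum>m<2. s ^ m / fact m) = 1 + s" by (simp add: numeral_2_eq_2)
  ultimately show ?thesis using t(2) by linarith
next
  case False
  obtain t where t: "\<bar>t\<bar> \<le> \<bar>s\<bar>" "exp s = (\<Sum>m<3. s ^ m / fact m) + exp t / fact 3 * s ^ 3"
    using Maclaurin_exp_le[of s 3] by blast
  have "s ^ 3 \<le> 0" using False by (simp add: power_le_zero_eq)
  then have "exp t / fact 3 * s ^ 3 \<le> 0" by (intro mult_nonneg_nonpos) auto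
  then show ?thesis using t(2) False
    by (simp add: numeral_3_eq_3 numeral_2_eq_2 power2_eq_square max_def)
qed

lemma powr_minus_one_mult_le_powr:
  fixes t b \<alpha> :: real
  assumes "0 < t" "t \<le> b" "\<alpha> \<le> 1"
  shows "b powr (\<alpha> - 1) * t \<le> t powr \<alpha>"
proof -
  have "b powr (\<alpha> - 1) * t \<le> t powr (\<alpha> - 1) * t"
    using assms by (intro mult_right_mono powr_mono2') auto
  also have "\<dots> = t powr \<alpha>" using assms by (simp add: powr_mult_base mult.commute)
  finally show ?thesis .
qed

lemma exp_truncated_le:
  fixes b y \<alpha> :: real
  assumes b: "b > 0" and \<alpha>: "0 < \<alpha>" "\<alpha> \<le> 1"
  defines "l \<equiv> b powr (\<alpha> - 1)"
  shows "exp (l * min y b) \<le> 1 + l * min y b + l\<^sup>2 / 2 * (y\<^sup>2 * exp (max y 0 powr \<alpha>))"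
proof -
  define t where "t = min y b"
  have l: "l > 0" using b by (simp add: l_def)
  have exponent: "max (l * t) 0 \<le> max y 0 powr \<alpha>"
  proof (cases "t > 0")
    case True
    then have "l * t \<le> t powr \<alpha>"
      unfolding l_def using \<alpha> by (intro powr_minus_one_mult_le_powr) (auto simp: t_def)
    also have "\<dots> \<le> max y 0 powr \<alpha>" using True \<alpha> by (intro powr_mono2) (auto simp: t_def)
    finally show ?thesis by simp
  next
    case False
    then show ?thesis using l by (simp add: mult_nonneg_nonpos)
  qed
  have "t\<^sup>2 * exp (max (l * t) 0) \<le> y\<^sup>2 * exp (max y 0 powr \<alpha>)"
    using exponent b by (intro mult_mono) (auto simp: t_def min_def)
  then have "l\<^sup>2 / 2 * (t\<^sup>2 * exp (max (l * t) 0)) \<le> l\<^sup>2 / 2 * (y\<^sup>2 * exp (max y 0 powr \<alpha>))"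
    by (rule mult_left_mono) simp
  then have "(l * t)\<^sup>2 / 2 * exp (max (l * t) 0) \<le> l\<^sup>2 / 2 * (y\<^sup>2 * exp (max y 0 powr \<alpha>))"
    by (simp add: power_mult_distrib mult_ac)
  then show ?thesis using exp_le_quadratic_bound[of "l * t"] unfolding t_def by linarith
qed

lemma integrable_bounded_mult:
  fixes f g :: "'a \<Rightarrow> real"
  assumes "integrable M f" "g \<in> borel_measurable M" "\<And>x. \<bar>g x\<bar> \<le> B"
  shows "integrable M (\<lambda>x. g x * f x)"
proof (rule Bochner_Integration.integrable_bound[where f="\<lambda>x. B * f x"])
  show "AE x in M. norm (g x * f x) \<le> norm (B * f x)"
    using assms(3)
    by (intro AE_I2) (auto simp: abs_mult intro!: mult_right_mono order_trans[OF _ abs_ge_self] abs_ge_zero)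
qed (use assms in auto)

lemma sum_min_ge_or_exists_gt:
  fixes f :: "nat \<Rightarrow> real"
  assumes "b \<le> (\<Sum>i\<in>I. f i)"
  shows "(\<exists>i\<in>I. b < f i) \<or> b \<le> (\<Sum>i\<in>I. min (f i) b)"
proof (cases "\<exists>i\<in>I. b < f i")
  case False
  then have "(\<Sum>i\<in>I. min (f i) b) = (\<Sum>i\<in>I. f i)" by (intro sum.cong) auto
  then show ?thesis using assms by simp
qed simp

lemma Max_partial_avg_ge_iff:
  fixes f :: "nat \<Rightarrow> real"
  assumes "n \<ge> 1"
  shows "Max ((\<lambda>k. (\<Sum>i=1..k. f i) / real n) ` {1..n}) \<ge> x \<longleftrightarrow>
         (\<exists>k\<in>{1..n}. real n * x \<le> (\<Sum>i=1..k. f i))"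
  using assms by (subst Max_ge_iff) (auto simp: pos_le_divide_eq mult.commute)

lemma ereal_ln_div_le_of_le_exp:
  fixes p c N :: real
  assumes "N > 0" "p \<le> exp (c * N)"
  shows "ereal_ln p / ereal N \<le> ereal c"
proof (cases "p \<le> 0")
  case False
  then have "ln p \<le> c * N" using assms(2) by (metis ln_exp ln_mono not_le)
  then show ?thesis using False assms(1) by (simp add: ereal_ln_def pos_divide_le_eq)
qed (use assms in \<open>simp add: ereal_ln_def\<close>)

lemma limsup_ereal_ln_div_le:
  fixes P :: "nat \<Rightarrow> real" and \<alpha> c :: real
  assumes "eventually (\<lambda>n. P n \<le> exp (c * real n powr \<alpha>)) sequentially"
  shows "limsup (\<lambda>n. ereal_ln (P n) / ereal (real n powr \<alpha>)) \<le> ereal c"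
proof (rule Limsup_bounded)
  show "eventually (\<lambda>n. ereal_ln (P n) / ereal (real n powr \<alpha>) \<le> ereal c) sequentially"
    using assms eventually_gt_at_top[of "0::nat"]
    by eventually_elim (intro ereal_ln_div_le_of_le_exp, auto)
qed

lemma tail_bound_le_exp:
  fixes n x \<delta> \<alpha> :: real
  assumes n: "n \<ge> 1" and x: "x > 0" and \<delta>: "\<delta> \<ge> 0" and \<alpha>: "\<alpha> > 0"
    and log: "ln (n + \<delta> * x powr (- 2 * \<alpha>)) \<le> \<delta> / 2 * n powr \<alpha>"
  defines "V \<equiv> \<delta> * x powr (2 - 2 * \<alpha>) * n powr (2 - \<alpha>)" and "b \<equiv> n * x"
  shows "n * exp (- (b powr \<alpha>) + (b powr (\<alpha> - 1))\<^sup>2 / 2 * V) + V / (b\<^sup>2 * exp (b powr \<alpha>))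
    \<le> exp ((- (x powr \<alpha>) + \<delta>) * n powr \<alpha>)"
proof -
  define K where "K = \<delta> * x powr (- 2 * \<alpha>)"
  define N where "N = n powr \<alpha>"
  have K: "K \<ge> 0" using \<delta> by (simp add: K_def)
  have b_powr: "b powr \<alpha> = x powr \<alpha> * N"
    using n x by (simp add: b_def N_def powr_mult mult.commute)
  have drift: "(b powr (\<alpha> - 1))\<^sup>2 / 2 * V = \<delta> / 2 * N"
  proof -
    have "(b powr (\<alpha> - 1))\<^sup>2 = n powr (2 * \<alpha> - 2) * x powr (2 * \<alpha> - 2)"
      using n x by (simp add: b_def power2_eq_square powr_mult powr_add[symmetric] algebra_simps)
    moreover have "n powr (2 * \<alpha> - 2) * n powr (2 - \<alpha>) = N"
      by (simp add: N_def powr_add[symmetric])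
    moreover have "x powr (2 * \<alpha> - 2) * x powr (2 - 2 * \<alpha>) = 1"
      using x by (simp add: powr_add[symmetric])
    ultimately show ?thesis unfolding V_def
      by (simp add: field_simps)
  qed
  have "n powr (2 - \<alpha>) = n\<^sup>2 * n powr (- \<alpha>)" "x powr (2 - 2 * \<alpha>) = x\<^sup>2 * x powr (- 2 * \<alpha>)"
    using n x by (simp_all add: powr_diff powr_minus_divide powr_numeral divide_inverse)
  then have "V / b\<^sup>2 = K * n powr (- \<alpha>)"
    using n x unfolding V_def K_def b_def by (simp add: power_mult_distrib)
  also have "\<dots> \<le> K" using n \<alpha> K by (intro mult_left_le) (auto simp: powr_minus_divide ge_one_powr_ge_zero)
  finally have "V / b\<^sup>2 * exp (- (b powr \<alpha>)) \<le> K * exp (- (b powr \<alpha>) + \<delta> / 2 * N)"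
    using K \<delta> by (intro mult_mono) (auto simp: N_def)
  moreover have "V / (b\<^sup>2 * exp (b powr \<alpha>)) = V / b\<^sup>2 * exp (- (b powr \<alpha>))"
    by (simp add: exp_minus field_simps)
  ultimately have "V / (b\<^sup>2 * exp (b powr \<alpha>)) \<le> K * exp (- (x powr \<alpha> * N) + \<delta> / 2 * N)"
    by (simp add: b_powr)
  then have "n * exp (- (b powr \<alpha>) + (b powr (\<alpha> - 1))\<^sup>2 / 2 * V) + V / (b\<^sup>2 * exp (b powr \<alpha>))
      \<le> (n + K) * exp (- (x powr \<alpha> * N) + \<delta> / 2 * N)"
    unfolding drift b_powr by (simp add: distrib_right)
  also have "\<dots> = exp (ln (n + K) - x powr \<alpha> * N + \<delta> / 2 * N)"
    using n K by (simp add: exp_add exp_diff)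
  also have "\<dots> \<le> exp ((- (x powr \<alpha>) + \<delta>) * N)"
    using log unfolding K_def[symmetric] N_def[symmetric] by (simp add: algebra_simps)
  finally show ?thesis unfolding N_def .
qed

locale martingale_differences_exp_moment = prob_space M for M :: "'a measure" +
  fixes F :: "nat \<Rightarrow> 'a measure" and \<xi> :: "nat \<Rightarrow> 'a \<Rightarrow> real" and \<alpha> :: real
  assumes subalgebra_F: "\<And>i. subalgebra M (F i)"
    and sets_F_Suc: "\<And>i. sets (F i) \<subseteq> sets (F (Suc i))"
    and adapted: "\<And>i. \<xi> i \<in> borel_measurable (F i)"
    and integrable_\<xi>: "\<And>i. integrable M (\<xi> i)"
    and cond_exp_\<xi>: "\<And>i. i \<ge> 1 \<Longrightarrow> AE \<omega> in M. real_cond_exp M (F (i - 1)) (\<xi> i) \<omega> = 0"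
    and \<alpha>: "0 < \<alpha>" "\<alpha> \<le> 1"
    and integrable_moment: "\<And>i. i \<ge> 1 \<Longrightarrow>
        integrable M (\<lambda>\<omega>. (\<xi> i \<omega>)\<^sup>2 * exp (max (\<xi> i \<omega>) 0 powr \<alpha>))"
begin

lemma sigma_finite_subalgebra_F: "sigma_finite_subalgebra M (F i)"
  by (rule finite_measure_subalgebra_is_sigma_finite)
     (simp add: finite_measure_subalgebra_def finite_measure_subalgebra_axioms_def
        subalgebra_F finite_measure_axioms)

lemma measurable_F_mono:
  assumes "i \<le> j" "f \<in> borel_measurable (F i)"
  shows "f \<in> borel_measurable (F j)"
proof -
  have "sets (F i) \<subseteq> sets (F j)"
    using lift_Suc_mono_le[of "\<lambda>i. sets (F i)"] sets_F_Suc assms(1) by blast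
  then have "subalgebra (F j) (F i)"
    using subalgebra_F[of i] subalgebra_F[of j] by (auto simp: subalgebra_def)
  then show ?thesis using assms(2) measurable_from_subalg by blast
qed

lemma measurable_\<xi> [measurable]: "\<xi> i \<in> borel_measurable M"
  using measurable_from_subalg[OF subalgebra_F adapted] .

definition weighted_sq :: "nat \<Rightarrow> 'a \<Rightarrow> real" where
  "weighted_sq i \<omega> = (\<xi> i \<omega>)\<^sup>2 * exp (max (\<xi> i \<omega>) 0 powr \<alpha>)"

text \<open>Clipping at 0 changes the conditional expectation only on a null set, but makes the
  compensator nonnegative everywhere, so the bounds on the process below hold pointwise.\<close>
definition cond_weighted_sq :: "nat \<Rightarrow> 'a \<Rightarrow> real" where
  "cond_weighted_sq i \<omega> = max (real_cond_exp M (F (i - 1)) (weighted_sq i) \<omega>) 0"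

definition exp_supermart :: "real \<Rightarrow> nat \<Rightarrow> 'a \<Rightarrow> real" where
  "exp_supermart b k \<omega> = exp (\<Sum>i=1..k. b powr (\<alpha> - 1) * min (\<xi> i \<omega>) b
      - (b powr (\<alpha> - 1))\<^sup>2 / 2 * cond_weighted_sq i \<omega>)"

lemma measurable_weighted_sq [measurable]: "weighted_sq i \<in> borel_measurable M"
  unfolding weighted_sq_def by measurable

lemma weighted_sq_nonneg: "0 \<le> weighted_sq i \<omega>"
  by (simp add: weighted_sq_def)

lemma integrable_weighted_sq: "i \<ge> 1 \<Longrightarrow> integrable M (weighted_sq i)"
  using integrable_moment unfolding weighted_sq_def[abs_def] by simp

lemma cond_weighted_sq_nonneg: "0 \<le> cond_weighted_sq i \<omega>"
  by (simp add: cond_weighted_sq_def)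

lemma measurable_cond_weighted_sq_F:
  "1 \<le> i \<Longrightarrow> i \<le> Suc k \<Longrightarrow> cond_weighted_sq i \<in> borel_measurable (F k)"
  unfolding cond_weighted_sq_def by (rule measurable_F_mono[of "i - 1"]) auto

lemma integrable_cond_weighted_sq: "i \<ge> 1 \<Longrightarrow> integrable M (cond_weighted_sq i)"
  unfolding cond_weighted_sq_def
  using sigma_finite_subalgebra.real_cond_exp_int(1)[OF sigma_finite_subalgebra_F
      integrable_weighted_sq]
  by (intro integrable_max) auto

lemma measurable_exp_supermart_F: "exp_supermart b k \<in> borel_measurable (F k)"
proof -
  have [measurable]: "\<xi> i \<in> borel_measurable (F k)" "cond_weighted_sq i \<in> borel_measurable (F k)"
    if "i \<in> {1..k}" for i
    using that measurable_F_mono[OF _ adapted] measurable_cond_weighted_sq_F by auto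
  show ?thesis unfolding exp_supermart_def by measurable
qed

lemma measurable_exp_supermart [measurable]: "exp_supermart b k \<in> borel_measurable M"
  using measurable_from_subalg[OF subalgebra_F measurable_exp_supermart_F] .

lemma exp_supermart_bounds:
  assumes "b > 0"
  shows "0 \<le> exp_supermart b k \<omega>" "exp_supermart b k \<omega> \<le> exp (real k * b powr \<alpha>)"
proof -
  have "b powr (\<alpha> - 1) * min (\<xi> i \<omega>) b - (b powr (\<alpha> - 1))\<^sup>2 / 2 * cond_weighted_sq i \<omega>
      \<le> b powr \<alpha>" for i
  proof -
    have "b powr (\<alpha> - 1) * min (\<xi> i \<omega>) b \<le> b powr (\<alpha> - 1) * b" by (intro mult_left_mono) auto
    also have "\<dots> = b powr \<alpha>" using assms by (simp add: powr_mult_base mult.commute)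
    moreover have "0 \<le> (b powr (\<alpha> - 1))\<^sup>2 / 2 * cond_weighted_sq i \<omega>"
      using cond_weighted_sq_nonneg[of i \<omega>] by simp
    ultimately show ?thesis by linarith
  qed
  then have "(\<Sum>i=1..k. b powr (\<alpha> - 1) * min (\<xi> i \<omega>) b
      - (b powr (\<alpha> - 1))\<^sup>2 / 2 * cond_weighted_sq i \<omega>) \<le> real k * b powr \<alpha>"
    using sum_mono[of "{1..k}", where g="\<lambda>_. b powr \<alpha>"] by simp
  then show "exp_supermart b k \<omega> \<le> exp (real k * b powr \<alpha>)" by (simp add: exp_supermart_def)
qed (simp add: exp_supermart_def)

lemma integrable_exp_supermart: "b > 0 \<Longrightarrow> integrable M (exp_supermart b k)"
  using exp_supermart_bounds
  by (intro integrable_const_bound[where B="exp (real k * b powr \<alpha>)"]) auto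

lemma exp_truncated_increment_le:
  assumes "b > 0"
  defines "l \<equiv> b powr (\<alpha> - 1)"
  shows "exp (l * min (\<xi> i \<omega>) b) \<le> 1 + l * \<xi> i \<omega> + l\<^sup>2 / 2 * weighted_sq i \<omega>"
proof -
  have "exp (l * min (\<xi> i \<omega>) b) \<le> 1 + l * min (\<xi> i \<omega>) b + l\<^sup>2 / 2 * weighted_sq i \<omega>"
    using exp_truncated_le[OF assms(1) \<alpha>] unfolding l_def weighted_sq_def .
  moreover have "l * min (\<xi> i \<omega>) b \<le> l * \<xi> i \<omega>"
    using assms(1) by (simp add: l_def mult_left_mono)
  ultimately show ?thesis by linarith
qed

lemma integral_mult_\<xi>_eq_0:
  assumes G: "G \<in> borel_measurable (F k)" "\<And>\<omega>. \<bar>G \<omega>\<bar> \<le> B"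
  shows "(\<integral>\<omega>. G \<omega> * \<xi> (Suc k) \<omega> \<partial>M) = 0"
proof -
  interpret sigma_finite_subalgebra M "F k" by (rule sigma_finite_subalgebra_F)
  have [measurable]: "G \<in> borel_measurable M" using measurable_from_subalg[OF subalgebra_F G(1)] .
  have "integrable M (\<lambda>\<omega>. G \<omega> * \<xi> (Suc k) \<omega>)"
    by (rule integrable_bounded_mult[OF integrable_\<xi> _ G(2)]) simp
  then have "(\<integral>\<omega>. G \<omega> * \<xi> (Suc k) \<omega> \<partial>M)
      = (\<integral>\<omega>. G \<omega> * real_cond_exp M (F k) (\<xi> (Suc k)) \<omega> \<partial>M)"
    using real_cond_exp_intg(2)[OF _ G(1)] by simp
  also have "\<dots> = (\<integral>\<omega>. 0 \<partial>M)"
    using cond_exp_\<xi>[of "Suc k"] by (intro integral_cong_AE) auto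
  finally show ?thesis by simp
qed

lemma integral_mult_weighted_sq_le:
  assumes G: "G \<in> borel_measurable (F k)" "\<And>\<omega>. 0 \<le> G \<omega>" "\<And>\<omega>. G \<omega> \<le> B"
  shows "(\<integral>\<omega>. G \<omega> * weighted_sq (Suc k) \<omega> \<partial>M) \<le> (\<integral>\<omega>. G \<omega> * cond_weighted_sq (Suc k) \<omega> \<partial>M)"
proof -
  interpret sigma_finite_subalgebra M "F k" by (rule sigma_finite_subalgebra_F)
  have [measurable]: "G \<in> borel_measurable M" using measurable_from_subalg[OF subalgebra_F G(1)] .
  have G_abs: "\<bar>G \<omega>\<bar> \<le> B" for \<omega> using G(2,3)[of \<omega>] by simp
  have int: "integrable M (\<lambda>\<omega>. G \<omega> * weighted_sq (Suc k) \<omega>)"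
    by (rule integrable_bounded_mult[OF integrable_weighted_sq _ G_abs]) simp_all
  have int_cond: "integrable M (\<lambda>\<omega>. G \<omega> * cond_weighted_sq (Suc k) \<omega>)"
    by (rule integrable_bounded_mult[OF integrable_cond_weighted_sq _ G_abs]) simp_all
  have "(\<integral>\<omega>. G \<omega> * weighted_sq (Suc k) \<omega> \<partial>M)
      = (\<integral>\<omega>. G \<omega> * real_cond_exp M (F k) (weighted_sq (Suc k)) \<omega> \<partial>M)"
    using real_cond_exp_intg(2)[OF int G(1)] by simp
  also have "\<dots> \<le> (\<integral>\<omega>. G \<omega> * cond_weighted_sq (Suc k) \<omega> \<partial>M)"
    using real_cond_exp_intg(1)[OF int G(1)] int_cond G(2)
    by (intro integral_mono) (auto simp: cond_weighted_sq_def intro!: mult_left_mono)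
  finally show ?thesis .
qed

lemma integral_mult_exp_increment_le:
  assumes b: "b > 0"
    and G: "G \<in> borel_measurable (F k)" "\<And>\<omega>. 0 \<le> G \<omega>" "\<And>\<omega>. G \<omega> \<le> B"
  defines "l \<equiv> b powr (\<alpha> - 1)"
  shows "(\<integral>\<omega>. G \<omega> * exp (l * min (\<xi> (Suc k) \<omega>) b) \<partial>M)
    \<le> (\<integral>\<omega>. G \<omega> * (1 + l\<^sup>2 / 2 * cond_weighted_sq (Suc k) \<omega>) \<partial>M)"
proof -
  have [measurable]: "G \<in> borel_measurable M" using measurable_from_subalg[OF subalgebra_F G(1)] .
  have G_abs: "\<bar>G \<omega>\<bar> \<le> B" for \<omega> using G(2,3)[of \<omega>] by simp
  have int_G: "integrable M G"
    using G_abs by (intro integrable_const_bound[where B=B]) auto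
  have int_G\<xi>: "integrable M (\<lambda>\<omega>. G \<omega> * \<xi> (Suc k) \<omega>)"
    and int_Gw: "integrable M (\<lambda>\<omega>. G \<omega> * weighted_sq (Suc k) \<omega>)"
    and int_Gc: "integrable M (\<lambda>\<omega>. G \<omega> * cond_weighted_sq (Suc k) \<omega>)"
    by (auto intro!: integrable_bounded_mult[OF _ _ G_abs] integrable_\<xi> integrable_weighted_sq
        integrable_cond_weighted_sq)
  have "\<bar>exp (l * min (\<xi> (Suc k) \<omega>) b)\<bar> \<le> exp (l * b)" for \<omega>
    using b by (simp add: l_def mult_left_mono)
  then have int_Ge: "integrable M (\<lambda>\<omega>. G \<omega> * exp (l * min (\<xi> (Suc k) \<omega>) b))"
    by (intro integrable_bounded_mult[OF _ _ G_abs] integrable_const_bound[where B="exp (l * b)"]) auto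
  have "(\<integral>\<omega>. G \<omega> * exp (l * min (\<xi> (Suc k) \<omega>) b) \<partial>M)
      \<le> (\<integral>\<omega>. G \<omega> + l * (G \<omega> * \<xi> (Suc k) \<omega>) + l\<^sup>2 / 2 * (G \<omega> * weighted_sq (Suc k) \<omega>) \<partial>M)"
  proof (rule integral_mono[OF int_Ge])
    fix \<omega>
    show "G \<omega> * exp (l * min (\<xi> (Suc k) \<omega>) b)
        \<le> G \<omega> + l * (G \<omega> * \<xi> (Suc k) \<omega>) + l\<^sup>2 / 2 * (G \<omega> * weighted_sq (Suc k) \<omega>)"
      using mult_left_mono[OF exp_truncated_increment_le[OF b, of "Suc k" \<omega>] G(2)[of \<omega>]]
      by (simp add: l_def algebra_simps)
  qed (use int_G int_G\<xi> int_Gw in auto)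
  also have "\<dots> = integral\<^sup>L M G + l\<^sup>2 / 2 * (\<integral>\<omega>. G \<omega> * weighted_sq (Suc k) \<omega> \<partial>M)"
    using int_G int_G\<xi> int_Gw integral_mult_\<xi>_eq_0[OF G(1) G_abs] by simp
  also have "\<dots> \<le> integral\<^sup>L M G + l\<^sup>2 / 2 * (\<integral>\<omega>. G \<omega> * cond_weighted_sq (Suc k) \<omega> \<partial>M)"
    using integral_mult_weighted_sq_le[OF G] by (simp add: mult_left_mono)
  also have "\<dots> = (\<integral>\<omega>. G \<omega> + l\<^sup>2 / 2 * (G \<omega> * cond_weighted_sq (Suc k) \<omega>) \<partial>M)"
    using int_G int_Gc by simp
  also have "\<dots> = (\<integral>\<omega>. G \<omega> * (1 + l\<^sup>2 / 2 * cond_weighted_sq (Suc k) \<omega>) \<partial>M)"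
    by (simp add: algebra_simps)
  finally show ?thesis .
qed

lemma integral_exp_supermart_Suc_le:
  assumes b: "b > 0"
  shows "integral\<^sup>L M (exp_supermart b (Suc k)) \<le> integral\<^sup>L M (exp_supermart b k)"
proof -
  define l where "l = b powr (\<alpha> - 1)"
  define a where "a \<omega> = l\<^sup>2 / 2 * cond_weighted_sq (Suc k) \<omega>" for \<omega>
  define G where "G \<omega> = exp_supermart b k \<omega> * exp (- a \<omega>)" for \<omega>
  have a: "0 \<le> a \<omega>" for \<omega> by (simp add: a_def cond_weighted_sq_nonneg)
  have [measurable]: "a \<in> borel_measurable (F k)"
    unfolding a_def using measurable_cond_weighted_sq_F[of "Suc k" k] by measurable
  have G_F: "G \<in> borel_measurable (F k)"
    unfolding G_def using measurable_exp_supermart_F by measurable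
  have G_le: "G \<omega> \<le> exp_supermart b k \<omega>" for \<omega>
    using exp_supermart_bounds(1)[OF b, of k \<omega>] a[of \<omega>] by (simp add: G_def mult_left_le)
  have G: "0 \<le> G \<omega>" "G \<omega> \<le> exp (real k * b powr \<alpha>)" for \<omega>
    using exp_supermart_bounds[OF b, of k \<omega>] G_le[of \<omega>] by (simp_all add: G_def)
  have exp_split: "exp (S + (p - q)) = exp S * exp (- q) * exp p" for S p q :: real
    by (simp add: mult_exp_exp)
  have "exp_supermart b (Suc k) = (\<lambda>\<omega>. G \<omega> * exp (l * min (\<xi> (Suc k) \<omega>) b))"
    unfolding exp_supermart_def G_def a_def l_def by (rule ext) (simp add: exp_split del: exp_minus)
  then have "integral\<^sup>L M (exp_supermart b (Suc k)) \<le> (\<integral>\<omega>. G \<omega> * (1 + a \<omega>) \<partial>M)"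
    using integral_mult_exp_increment_le[OF b G_F G] unfolding a_def l_def by simp
  also have "\<dots> \<le> integral\<^sup>L M (exp_supermart b k)"
  proof (rule integral_mono)
    have "\<bar>G \<omega>\<bar> \<le> exp (real k * b powr \<alpha>)" for \<omega> using G[of \<omega>] by simp
    then show "integrable M (\<lambda>\<omega>. G \<omega> * (1 + a \<omega>))"
      using measurable_from_subalg[OF subalgebra_F G_F]
      by (intro integrable_bounded_mult) (auto simp: a_def integrable_cond_weighted_sq)
    fix \<omega>
    have "exp (- a \<omega>) * (1 + a \<omega>) \<le> 1"
      using exp_ge_add_one_self[of "a \<omega>"] by (simp add: exp_minus field_simps)
    then show "G \<omega> * (1 + a \<omega>) \<le> exp_supermart b k \<omega>"
      using exp_supermart_bounds[OF b, of k \<omega>] by (simp add: G_def mult_left_le mult.assoc)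
  qed (rule integrable_exp_supermart[OF b])
  finally show ?thesis .
qed

lemma integral_exp_supermart_le_1:
  assumes "b > 0"
  shows "integral\<^sup>L M (exp_supermart b k) \<le> 1"
proof (induction k)
  case 0
  then show ?case by (simp add: exp_supermart_def[abs_def] prob_space)
next
  case (Suc k)
  then show ?case using integral_exp_supermart_Suc_le[OF assms, of k] by linarith
qed

lemma measure_truncated_sum_ge_le:
  assumes b: "b > 0" and V: "AE \<omega> in M. (\<Sum>i=1..k. cond_weighted_sq i \<omega>) \<le> V"
  shows "measure M {\<omega> \<in> space M. b \<le> (\<Sum>i=1..k. min (\<xi> i \<omega>) b)}
    \<le> exp (- (b powr \<alpha>) + (b powr (\<alpha> - 1))\<^sup>2 / 2 * V)"
proof -
  define l where "l = b powr (\<alpha> - 1)"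
  define c where "c = exp (l * b - l\<^sup>2 / 2 * V)"
  have l: "l > 0" using b by (simp add: l_def)
  have lb: "l * b = b powr \<alpha>" using b by (simp add: l_def powr_mult_base mult.commute)
  have "measure M {\<omega> \<in> space M. b \<le> (\<Sum>i=1..k. min (\<xi> i \<omega>) b)}
      \<le> measure M {\<omega> \<in> space M. c \<le> exp_supermart b k \<omega>}"
  proof (rule finite_measure_mono_AE)
    show "AE \<omega> in M. \<omega> \<in> {\<omega> \<in> space M. b \<le> (\<Sum>i=1..k. min (\<xi> i \<omega>) b)}
        \<longrightarrow> \<omega> \<in> {\<omega> \<in> space M. c \<le> exp_supermart b k \<omega>}"
      using V
    proof eventually_elim
      case (elim \<omega>)
      have supermart: "exp_supermart b k \<omega>
          = exp (l * (\<Sum>i=1..k. min (\<xi> i \<omega>) b) - l\<^sup>2 / 2 * (\<Sum>i=1..k. cond_weighted_sq i \<omega>))"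
        by (simp add: exp_supermart_def l_def sum_subtractf sum_distrib_left)
      have "l * b - l\<^sup>2 / 2 * V
          \<le> l * (\<Sum>i=1..k. min (\<xi> i \<omega>) b) - l\<^sup>2 / 2 * (\<Sum>i=1..k. cond_weighted_sq i \<omega>)"
        if "b \<le> (\<Sum>i=1..k. min (\<xi> i \<omega>) b)"
        using that elim l by (intro diff_mono mult_left_mono) auto
      then show ?case by (simp add: supermart c_def)
    qed
  qed measurable
  also have "\<dots> \<le> integral\<^sup>L M (exp_supermart b k) / c"
    using integrable_exp_supermart[OF b] exp_supermart_bounds(1)[OF b]
    by (intro integral_Markov_inequality_measure[where A="space M"]) (auto simp: c_def)
  also have "\<dots> \<le> 1 / c"
    using integral_exp_supermart_le_1[OF b] by (simp add: c_def divide_right_mono)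
  also have "\<dots> = exp (- (b powr \<alpha>) + (b powr (\<alpha> - 1))\<^sup>2 / 2 * V)"
    unfolding c_def lb[symmetric] l_def[symmetric] by (simp add: exp_diff)
  finally show ?thesis .
qed

lemma AE_sum_cond_weighted_sq_le:
  assumes V: "AE \<omega> in M. \<bar>\<Sum>i=1..n. real_cond_exp M (F (i - 1)) (weighted_sq i) \<omega>\<bar> \<le> V"
    and "k \<le> n"
  shows "AE \<omega> in M. (\<Sum>i=1..k. cond_weighted_sq i \<omega>) \<le> V"
proof -
  have "AE \<omega> in M. 0 \<le> real_cond_exp M (F (i - 1)) (weighted_sq i) \<omega>" for i
    by (rule sigma_finite_subalgebra.real_cond_exp_pos[OF sigma_finite_subalgebra_F])
       (auto simp: weighted_sq_def)
  then have "AE \<omega> in M. \<forall>i. 0 \<le> real_cond_exp M (F (i - 1)) (weighted_sq i) \<omega>"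
    by (simp add: AE_all_countable)
  with V show ?thesis
  proof eventually_elim
    case (elim \<omega>)
    then have "(\<Sum>i=1..k. cond_weighted_sq i \<omega>)
        = (\<Sum>i=1..k. real_cond_exp M (F (i - 1)) (weighted_sq i) \<omega>)"
      by (simp add: cond_weighted_sq_def)
    also have "\<dots> \<le> (\<Sum>i=1..n. real_cond_exp M (F (i - 1)) (weighted_sq i) \<omega>)"
      using elim(2) \<open>k \<le> n\<close> by (intro sum_mono2) auto
    finally show ?case using elim(1) by linarith
  qed
qed

lemma sum_integral_weighted_sq_le:
  assumes V: "AE \<omega> in M. \<bar>\<Sum>i=1..n. real_cond_exp M (F (i - 1)) (weighted_sq i) \<omega>\<bar> \<le> V"
  shows "(\<Sum>i=1..n. integral\<^sup>L M (weighted_sq i)) \<le> V"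
proof -
  have int: "integrable M (real_cond_exp M (F (i - 1)) (weighted_sq i))"
    and eq: "integral\<^sup>L M (real_cond_exp M (F (i - 1)) (weighted_sq i)) = integral\<^sup>L M (weighted_sq i)"
    if "i \<in> {1..n}" for i
    using sigma_finite_subalgebra.real_cond_exp_int[OF sigma_finite_subalgebra_F
        integrable_weighted_sq] that by auto
  have "(\<Sum>i=1..n. integral\<^sup>L M (weighted_sq i))
      = (\<integral>\<omega>. (\<Sum>i=1..n. real_cond_exp M (F (i - 1)) (weighted_sq i) \<omega>) \<partial>M)"
    using int eq by (simp add: Bochner_Integration.integral_sum)
  also have "\<dots> \<le> (\<integral>\<omega>. V \<partial>M)"
    using V int by (intro integral_mono_AE) (auto elim: eventually_mono)
  finally show ?thesis by (simp add: prob_space)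
qed

lemma measure_gt_le_integral_weighted_sq:
  assumes b: "b > 0" and i: "i \<ge> 1"
  shows "measure M {\<omega> \<in> space M. b < \<xi> i \<omega>} \<le> integral\<^sup>L M (weighted_sq i) / (b\<^sup>2 * exp (b powr \<alpha>))"
proof -
  have "b\<^sup>2 * exp (b powr \<alpha>) \<le> weighted_sq i \<omega>" if "b < \<xi> i \<omega>" for \<omega>
    unfolding weighted_sq_def using that b \<alpha>
    by (intro mult_mono power_mono) (auto simp: powr_mono2)
  then have "measure M {\<omega> \<in> space M. b < \<xi> i \<omega>}
      \<le> measure M {\<omega> \<in> space M. b\<^sup>2 * exp (b powr \<alpha>) \<le> weighted_sq i \<omega>}"
    by (intro finite_measure_mono) auto
  also have "\<dots> \<le> integral\<^sup>L M (weighted_sq i) / (b\<^sup>2 * exp (b powr \<alpha>))"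
    using integrable_weighted_sq[OF i] b weighted_sq_nonneg
    by (intro integral_Markov_inequality_measure[where A="space M"]) auto
  finally show ?thesis .
qed

lemma measure_partial_sum_ge_le:
  assumes b: "b > 0"
    and V: "AE \<omega> in M. \<bar>\<Sum>i=1..n. real_cond_exp M (F (i - 1)) (weighted_sq i) \<omega>\<bar> \<le> V"
  shows "measure M {\<omega> \<in> space M. \<exists>k\<in>{1..n}. b \<le> (\<Sum>i=1..k. \<xi> i \<omega>)}
    \<le> real n * exp (- (b powr \<alpha>) + (b powr (\<alpha> - 1))\<^sup>2 / 2 * V) + V / (b\<^sup>2 * exp (b powr \<alpha>))"
proof -
  define A where "A k = {\<omega> \<in> space M. b \<le> (\<Sum>i=1..k. min (\<xi> i \<omega>) b)}" for k
  define B where "B i = {\<omega> \<in> space M. b < \<xi> i \<omega>}" for i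
  have [measurable]: "A k \<in> sets M" "B i \<in> sets M" for k i
    unfolding A_def B_def by measurable
  have "{\<omega> \<in> space M. \<exists>k\<in>{1..n}. b \<le> (\<Sum>i=1..k. \<xi> i \<omega>)} \<subseteq> (\<Union>k\<in>{1..n}. A k) \<union> (\<Union>i\<in>{1..n}. B i)"
  proof (intro subsetI)
    fix \<omega> assume "\<omega> \<in> {\<omega> \<in> space M. \<exists>k\<in>{1..n}. b \<le> (\<Sum>i=1..k. \<xi> i \<omega>)}"
    then obtain k where \<omega>: "\<omega> \<in> space M" and k: "k \<in> {1..n}" "b \<le> (\<Sum>i=1..k. \<xi> i \<omega>)"
      by blast
    from sum_min_ge_or_exists_gt[OF k(2)]
    show "\<omega> \<in> (\<Union>k\<in>{1..n}. A k) \<union> (\<Union>i\<in>{1..n}. B i)"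
      using \<omega> k(1) by (auto simp: A_def B_def)
  qed
  then have "measure M {\<omega> \<in> space M. \<exists>k\<in>{1..n}. b \<le> (\<Sum>i=1..k. \<xi> i \<omega>)}
      \<le> measure M ((\<Union>k\<in>{1..n}. A k) \<union> (\<Union>i\<in>{1..n}. B i))"
    by (intro finite_measure_mono) auto
  also have "\<dots> \<le> measure M (\<Union>k\<in>{1..n}. A k) + measure M (\<Union>i\<in>{1..n}. B i)"
    by (intro measure_Un_le) auto
  also have "\<dots> \<le> (\<Sum>k=1..n. measure M (A k)) + (\<Sum>i=1..n. measure M (B i))"
    by (intro add_mono finite_measure_subadditive_finite) auto
  also have "(\<Sum>k=1..n. measure M (A k))
      \<le> (\<Sum>k=1..n. exp (- (b powr \<alpha>) + (b powr (\<alpha> - 1))\<^sup>2 / 2 * V))"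
    unfolding A_def
    by (intro sum_mono measure_truncated_sum_ge_le[OF b AE_sum_cond_weighted_sq_le[OF V]]) auto
  also have "(\<Sum>i=1..n. measure M (B i)) \<le> (\<Sum>i=1..n. integral\<^sup>L M (weighted_sq i)) / (b\<^sup>2 * exp (b powr \<alpha>))"
    unfolding sum_divide_distrib B_def
    by (intro sum_mono measure_gt_le_integral_weighted_sq[OF b]) auto
  also have "\<dots> \<le> V / (b\<^sup>2 * exp (b powr \<alpha>))"
    using sum_integral_weighted_sq_le[OF V] b by (simp add: divide_right_mono)
  finally show ?thesis by simp
qed

lemma eventually_measure_max_partial_avg_ge_le:
  assumes x: "x > 0" and \<delta>: "\<delta> > 0"
    and ups: "eventually (\<lambda>n. esssup M (\<lambda>\<omega>. ereal \<bar>\<Sum>i=1..n. real_cond_exp M (F (i - 1)) (weighted_sq i) \<omega>\<bar>)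
        \<le> ereal (\<delta> * x powr (2 - 2 * \<alpha>) * real n powr (2 - \<alpha>))) sequentially"
  shows "eventually (\<lambda>n. measure M {\<omega> \<in> space M.
      Max ((\<lambda>k. (\<Sum>i=1..k. \<xi> i \<omega>) / real n) ` {1..n}) \<ge> x}
    \<le> exp ((- (x powr \<alpha>) + \<delta>) * real n powr \<alpha>)) sequentially"
proof -
  define K where "K = \<delta> * x powr (- 2 * \<alpha>)"
  have "K \<ge> 0" using \<delta> by (simp add: K_def)
  then have "((\<lambda>n::nat. ln (real n + K) / real n powr \<alpha>) \<longlongrightarrow> 0) sequentially"
    using \<alpha> by real_asymp
  then have "eventually (\<lambda>n. ln (real n + K) / real n powr \<alpha> < \<delta> / 2) sequentially"
    using \<delta> by (intro order_tendstoD(2)) auto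
  with eventually_ge_at_top[of "1::nat"] ups show ?thesis
  proof eventually_elim
    case (elim n)
    define V where "V = \<delta> * x powr (2 - 2 * \<alpha>) * real n powr (2 - \<alpha>)"
    have n: "real n \<ge> 1" using elim(1) by simp
    note ups_n = elim(2)
    have "AE \<omega> in M. \<bar>\<Sum>i=1..n. real_cond_exp M (F (i - 1)) (weighted_sq i) \<omega>\<bar> \<le> V"
      using esssup_AE[of "\<lambda>\<omega>. ereal \<bar>\<Sum>i=1..n. real_cond_exp M (F (i - 1)) (weighted_sq i) \<omega>\<bar>" M]
    proof eventually_elim
      case (elim \<omega>)
      from order_trans[OF elim ups_n] show ?case by (simp add: V_def)
    qed
    then have "measure M {\<omega> \<in> space M. \<exists>k\<in>{1..n}. real n * x \<le> (\<Sum>i=1..k. \<xi> i \<omega>)}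
        \<le> real n * exp (- ((real n * x) powr \<alpha>) + ((real n * x) powr (\<alpha> - 1))\<^sup>2 / 2 * V)
          + V / ((real n * x)\<^sup>2 * exp ((real n * x) powr \<alpha>))"
      using n x by (intro measure_partial_sum_ge_le) auto
    also have "\<dots> \<le> exp ((- (x powr \<alpha>) + \<delta>) * real n powr \<alpha>)"
      unfolding V_def using n x \<delta> \<alpha> elim(3)
      by (intro tail_bound_le_exp) (auto simp: K_def pos_divide_less_eq less_imp_le)
    finally show ?case
      using Max_partial_avg_ge_iff[OF elim(1), where x=x] by simp
  qed
qed

end

theorem corollary2p1:
  fixes M :: "'a measure" and F :: "nat \<Rightarrow> 'a measure" and \<xi> :: "nat \<Rightarrow> 'a \<Rightarrow> real"
    and \<alpha> x :: real
  assumes prob: "prob_space M"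
    and sub: "\<And>i. subalgebra M (F i)"
    and mono: "\<And>i. sets (F i) \<subseteq> sets (F (Suc i))"
    and F0: "sets (F 0) = {{}, space M}"
    and xi0: "\<And>\<omega>. \<xi> 0 \<omega> = 0"
    and adapted: "\<And>i. \<xi> i \<in> borel_measurable (F i)"
    and integ: "\<And>i. integrable M (\<xi> i)"
    and mdiff: "\<And>i. i \<ge> 1 \<Longrightarrow> AE \<omega> in M. real_cond_exp M (F (i - 1)) (\<xi> i) \<omega> = 0"
    and alpha: "0 < \<alpha>" "\<alpha> < 1"
    and Cfin: "\<And>i. i \<ge> 1 \<Longrightarrow>
        integrable M (\<lambda>\<omega>. (\<xi> i \<omega>)\<^sup>2 * exp ((max (\<xi> i \<omega>) 0) powr \<alpha>))"
    and Ups: "\<And>\<epsilon>. \<epsilon> > 0 \<Longrightarrow> eventually (\<lambda>n.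
        esssup M (\<lambda>\<omega>. ereal \<bar>\<Sum>i=1..n. real_cond_exp M (F (i - 1))
            (\<lambda>\<omega>'. (\<xi> i \<omega>')\<^sup>2 * exp ((max (\<xi> i \<omega>') 0) powr \<alpha>)) \<omega>\<bar>)
          \<le> ereal (\<epsilon> * real n powr (2 - \<alpha>))) sequentially"
    and x: "x \<ge> 0"
  shows "limsup (\<lambda>n. ereal_ln (measure M {\<omega> \<in> space M.
            Max ((\<lambda>k. (\<Sum>i=1..k. \<xi> i \<omega>) / real n) ` {1..n}) \<ge> x}) / ereal (real n powr \<alpha>))
         \<le> ereal (- (x powr \<alpha>))"
proof -
  interpret martingale_differences_exp_moment M F \<xi> \<alpha>
    using prob sub mono adapted integ mdiff alpha Cfin
    by (simp add: martingale_differences_exp_moment_def martingale_differences_exp_moment_axioms_def)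
  show ?thesis
  proof (cases "x = 0")
    case True
    then show ?thesis
      using \<alpha> by (intro limsup_ereal_ln_div_le) auto
  next
    case False
    have weighted_sq_eq: "(\<lambda>\<omega>. (\<xi> i \<omega>)\<^sup>2 * exp ((max (\<xi> i \<omega>) 0) powr \<alpha>)) = weighted_sq i" for i
      by (simp add: weighted_sq_def fun_eq_iff)
    show ?thesis
    proof (rule ereal_le_epsilon2)
      fix \<delta> :: real assume "\<delta> > 0"
      with False x have "eventually (\<lambda>n. measure M {\<omega> \<in> space M.
          Max ((\<lambda>k. (\<Sum>i=1..k. \<xi> i \<omega>) / real n) ` {1..n}) \<ge> x}
        \<le> exp ((- (x powr \<alpha>) + \<delta>) * real n powr \<alpha>)) sequentially"
        by (intro eventually_measure_max_partial_avg_ge_le Ups[unfolded weighted_sq_eq]) auto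
      then show "limsup (\<lambda>n. ereal_ln (measure M {\<omega> \<in> space M.
            Max ((\<lambda>k. (\<Sum>i=1..k. \<xi> i \<omega>) / real n) ` {1..n}) \<ge> x}) / ereal (real n powr \<alpha>))
          \<le> ereal (- (x powr \<alpha>)) + ereal \<delta>"
        using limsup_ereal_ln_div_le by fastforce
    qed
  qed
qed

end
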